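(* Let $n$ be a positive integer and $p$ an odd prime. Let $S \subseteq \mathbb{Z}_n$ with $0 \notin S$, $S = -S$, $|S| = p-1$, such that the circulant graph $\mathrm{Cay}(\mathbb{Z}_n, S)$ is connected. Then $\mathrm{Cay}(\mathbb{Z}_n, S)$ admits a perfect code if and only if $p$ divides $n$ and $s \not\equiv s' \pmod p$ for all distinct $s, s' \in S \cup \{0\}$.
   Context: $\mathbb{Z}_n$ is the additive group of integers modulo $n$; elements are identified with integers in $\{0,1,\dots,n-1\}$ when reducing modulo $p$. For an inverse-closed subset $S$ of $\mathbb{Z}_n$ not containing $0$, the circulant graph $\mathrm{Cay}(\mathbb{Z}_n,S)$ has vertex set $\mathbb{Z}_n$, with $u,v$ adjacent iff $v-u \in S$; its degree is $|S|$. A perfect code in a graph $\Gamma=(V,E)$ is a subset $C \subseteq V$ that is an independent set such that every vertex of $V\setminus C$ is adjacent to exactly one vertex of $C$ (equivalently, the closed neighbourhoods of vertices of $C$ partition $V$). *)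

theory Defs
  imports "HOL-Computational_Algebra.Primes"
begin

text \<open>Z_n is modelled by the representatives {0..<n} (as naturals); arithmetic is mod n.\<close>

definition circ_adj :: "nat \<Rightarrow> nat set \<Rightarrow> nat \<Rightarrow> nat \<Rightarrow> bool" where
  "circ_adj n S u v \<longleftrightarrow> nat ((int v - int u) mod int n) \<in> S"

definition inverse_closed :: "nat \<Rightarrow> nat set \<Rightarrow> bool" where
  "inverse_closed n S \<longleftrightarrow> (\<forall>s\<in>S. (n - s) mod n \<in> S)"

definition circ_edges :: "nat \<Rightarrow> nat set \<Rightarrow> (nat \<times> nat) set" where
  "circ_edges n S = {(u, v). u < n \<and> v < n \<and> circ_adj n S u v}"

definition circ_connected :: "nat \<Rightarrow> nat set \<Rightarrow> bool" where
  "circ_connected n S \<longleftrightarrow> (\<forall>u<n. \<forall>v<n. (u, v) \<in> (circ_edges n S)\<^sup>*)"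

definition is_perfect_code :: "nat \<Rightarrow> nat set \<Rightarrow> nat set \<Rightarrow> bool" where
  "is_perfect_code n S C \<longleftrightarrow>
     C \<subseteq> {0..<n} \<and>
     (\<forall>c\<in>C. \<forall>c'\<in>C. \<not> circ_adj n S c c') \<and>
     (\<forall>v\<in>{0..<n} - C. card {c\<in>C. circ_adj n S v c} = 1)"

definition has_perfect_code :: "nat \<Rightarrow> nat set \<Rightarrow> bool" where
  "has_perfect_code n S \<longleftrightarrow> (\<exists>C. is_perfect_code n S C)"

end

theory Submission
  imports Defs "HOL-Computational_Algebra.Polynomial" "HOL-Number_Theory.Cong"
begin

text \<open>A perfect code \<open>C\<close> is exactly a set such that every element of \<open>\<int>\<^sub>n\<close> is uniquely
  \<open>t + c\<close> with \<open>t \<in> T = S \<union> {0}\<close> and \<open>c \<in> C\<close>; thus \<open>|T| = p\<close> divides \<open>n\<close>. Conversely, if the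
  elements of \<open>T\<close> are pairwise incongruent mod \<open>p\<close> and \<open>p\<close> divides \<open>n\<close>, the multiples of \<open>p\<close>
  form such a \<open>C\<close>. For necessity of the congruence condition, a polynomial argument in the group
  ring \<open>\<int>[\<int>\<^sub>n]\<close> (the freshman's dream modulo \<open>p\<close>) shows that \<open>C + p t = C\<close> for every
  \<open>t \<in> T\<close>; as \<open>S\<close> generates \<open>\<int>\<^sub>n\<close>, \<open>C\<close> is invariant under all multiples of \<open>p\<close>, so
  \<open>s \<equiv> s' (mod p)\<close> would give two decompositions \<open>s + (c + (s' - s)) = s' + c\<close>.\<close>

lemma mod_add_eq_iff:
  fixes a b g n :: nat
  assumes "a < n" "b < n" "g < n"
  shows "(a + b) mod n = g \<longleftrightarrow> b = (g + n - a) mod n"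
  using assms by (cases "a + b < n"; cases "g < a") (auto simp: le_mod_geq)

lemma mod_add_sub_eq_0_iff:
  fixes c g n :: nat
  assumes "c < n" "g < n"
  shows "(g + n - c) mod n = 0 \<longleftrightarrow> c = g"
  using mod_add_eq_iff[of c n 0 g] assms by auto

lemma mod_sub_add_cancel:
  fixes c g n :: nat
  assumes "c < n" "g < n"
  shows "((g + n - c) mod n + c) mod n = g"
  using mod_add_eq_iff[of c n "(g + n - c) mod n" g] assms by (simp add: add.commute)

lemma mod_neg_diff_eq:
  fixes u v n :: nat
  assumes "u < n" "v < n"
  shows "(n - (v + n - u) mod n) mod n = (u + n - v) mod n"
proof (cases u v rule: linorder_cases)
  case less
  then have "(v + n - u) mod n = v - u" "(u + n - v) mod n = u + n - v"
    using assms by (simp_all add: le_mod_geq)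
  then show ?thesis
    using less assms by simp
next
  case greater
  then have "(v + n - u) mod n = v + n - u" "(u + n - v) mod n = u - v"
    using assms by (simp_all add: le_mod_geq)
  then show ?thesis
    using greater assms by simp
qed simp

lemma mod_add_left_cancel_nat:
  fixes a b c n :: nat
  shows "(a + b) mod n = (a + c) mod n \<longleftrightarrow> b mod n = c mod n"
  using cong_add_lcancel_nat[of a b c n] unfolding cong_def .

lemma card_multiples_below:
  assumes "0 < p" "p dvd n"
  shows "card {c. c < n \<and> p dvd c} = n div p"
proof -
  obtain m where n: "n = p * m"
    using assms(2) by (rule dvdE)
  have "{c. c < n \<and> p dvd c} = (\<lambda>k. p * k) ` {..<m}"
  proof (intro equalityI subsetI)
    fix c assume "c \<in> {c. c < n \<and> p dvd c}"
    then obtain k where "c = p * k" "p * k < p * m"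
      using n by (auto elim: dvdE)
    then show "c \<in> (\<lambda>k. p * k) ` {..<m}"
      by simp
  qed (use n assms(1) in auto)
  then show ?thesis
    using n assms(1) by (simp add: card_image inj_on_def)
qed

lemma card_filter_eq_1_iff: "card {x\<in>A. P x} = 1 \<longleftrightarrow> (\<exists>!x\<in>A. P x)"
  unfolding One_nat_def card_1_singleton_iff by (auto simp: set_eq_iff) metis

section \<open>The freshman's dream modulo a prime\<close>

lemma prime_dvd_power_add_minus:
  fixes x y :: "'a::comm_ring_1"
  assumes "prime p"
  shows "of_nat p dvd (x + y) ^ p - x ^ p - y ^ p"
proof -
  have p: "0 < p" "p \<noteq> 0" using prime_gt_0_nat[OF assms] by simp_all
  have "{..p} = insert p (insert 0 {1..<p})"
    using p by auto
  then have "(x + y) ^ p - x ^ p - y ^ p = (\<Sum>k\<in>{1..<p}. of_nat (p choose k) * x ^ k * y ^ (p - k))"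
    using p by (simp add: binomial_ring)
  also have "of_nat p dvd \<dots>"
  proof (intro dvd_sum dvd_mult2)
    fix k assume "k \<in> {1..<p}"
    then have "p dvd p choose k"
      using dvd_choose_prime[OF _ _ _ assms] by simp
    then show "of_nat p dvd (of_nat (p choose k) :: 'a)"
      by (elim dvdE) simp
  qed
  finally show ?thesis .
qed

lemma prime_dvd_power_sum_minus:
  fixes f :: "'b \<Rightarrow> 'a::comm_ring_1"
  assumes "prime p"
  shows "of_nat p dvd (\<Sum>i\<in>I. f i) ^ p - (\<Sum>i\<in>I. f i ^ p)"
proof (induction I rule: infinite_finite_induct)
  case (insert i I)
  have "(\<Sum>j\<in>insert i I. f j) ^ p - (\<Sum>j\<in>insert i I. f j ^ p)
      = ((f i + sum f I) ^ p - f i ^ p - sum f I ^ p) + (sum f I ^ p - (\<Sum>j\<in>I. f j ^ p))"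
    using insert by (simp add: algebra_simps)
  also have "of_nat p dvd \<dots>"
    using insert prime_dvd_power_add_minus[OF assms] by (intro dvd_add)
  finally show ?case .
qed (use prime_gt_0_nat[OF assms] in \<open>simp_all add: power_0_left\<close>)

section \<open>Polynomials modulo X^n - 1\<close>

text \<open>The coefficient of \<open>X\<^sup>g\<close> in \<open>P\<close> reduced modulo \<open>X\<^sup>n - 1\<close>, i.e. in the image of \<open>P\<close>
  in the group ring of \<open>\<int>\<^sub>n\<close>.\<close>

definition cyclic_coeff :: "nat \<Rightarrow> 'a::comm_ring_1 poly \<Rightarrow> nat \<Rightarrow> 'a" where
  "cyclic_coeff n P g = (\<Sum>k | k \<le> degree P \<and> k mod n = g. coeff P k)"

lemma cyclic_coeff_eq_sum_le:
  assumes "degree P \<le> N"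
  shows "cyclic_coeff n P g = (\<Sum>k | k \<le> N \<and> k mod n = g. coeff P k)"
  unfolding cyclic_coeff_def
  by (rule sum.mono_neutral_left) (use assms in \<open>auto intro: le_degree\<close>)

lemma cyclic_coeff_0 [simp]: "cyclic_coeff n 0 g = 0"
  by (simp add: cyclic_coeff_def)

lemma cyclic_coeff_add: "cyclic_coeff n (P + Q) g = cyclic_coeff n P g + cyclic_coeff n Q g"
proof -
  let ?N = "max (degree P) (degree Q)"
  have "degree (P + Q) \<le> ?N"
    by (rule degree_add_le) auto
  then show ?thesis
    by (simp add: cyclic_coeff_eq_sum_le[of _ ?N] sum.distrib)
qed

lemma cyclic_coeff_diff: "cyclic_coeff n (P - Q) g = cyclic_coeff n P g - cyclic_coeff n Q g"
  using cyclic_coeff_add[of n "P - Q" Q g] by simp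

lemma cyclic_coeff_sum: "cyclic_coeff n (\<Sum>i\<in>I. f i) g = (\<Sum>i\<in>I. cyclic_coeff n (f i) g)"
  by (induction I rule: infinite_finite_induct) (auto simp: cyclic_coeff_add)

lemma cyclic_coeff_smult: "cyclic_coeff n (smult c P) g = c * cyclic_coeff n P g"
  unfolding cyclic_coeff_eq_sum_le[OF degree_smult_le] by (simp add: cyclic_coeff_def sum_distrib_left)

lemma cyclic_coeff_monom: "cyclic_coeff n (monom c k) g = (if k mod n = g then c else 0)"
  by (simp add: cyclic_coeff_eq_sum_le[OF degree_monom_le] coeff_monom sum.delta)

lemma cyclic_coeff_sum_monom_one:
  assumes "finite X"
  shows "cyclic_coeff n (\<Sum>x\<in>X. monom 1 (f x)) g = of_nat (card {x\<in>X. f x mod n = g})"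
  using assms by (simp add: cyclic_coeff_sum cyclic_coeff_monom sum.If_cases Int_def conj_commute)

lemma cyclic_coeff_monom_mult:
  assumes "g < n"
  shows "cyclic_coeff n (monom 1 j * Q) g = cyclic_coeff n Q ((g + n - j mod n) mod n)"
proof -
  have shift: "(j + i) mod n = g \<longleftrightarrow> i mod n = (g + n - j mod n) mod n" for i
    using mod_add_eq_iff[of "j mod n" n "i mod n" g] assms by (simp add: mod_add_eq)
  have "monom 1 j * Q = (\<Sum>i\<le>degree Q. monom (coeff Q i) (j + i))"
    by (subst poly_as_sum_of_monoms[symmetric, of Q]) (simp add: sum_distrib_left mult_monom)
  then have "cyclic_coeff n (monom 1 j * Q) g = (\<Sum>i\<le>degree Q. if (j + i) mod n = g then coeff Q i else 0)"
    by (simp only: cyclic_coeff_sum cyclic_coeff_monom)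
  also have "\<dots> = (\<Sum>i | i \<le> degree Q \<and> (j + i) mod n = g. coeff Q i)"
    by (simp add: sum.inter_filter[symmetric] atMost_def)
  finally show ?thesis
    by (simp add: cyclic_coeff_def shift)
qed

lemma cyclic_coeff_mult_const:
  assumes "\<And>h. h < n \<Longrightarrow> cyclic_coeff n Q h = \<kappa>" and "g < n"
  shows "cyclic_coeff n (P * Q) g = poly P 1 * \<kappa>"
proof -
  have "P * Q = (\<Sum>j\<le>degree P. smult (coeff P j) (monom 1 j * Q))"
    by (subst poly_as_sum_of_monoms[symmetric, of P]) (simp add: sum_distrib_right smult_monom_mult)
  moreover have "cyclic_coeff n (monom 1 j * Q) g = \<kappa>" for j
    using assms by (simp add: cyclic_coeff_monom_mult)
  ultimately show ?thesis
    by (simp add: cyclic_coeff_sum cyclic_coeff_smult poly_altdef sum_distrib_right)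
qed

lemma sum_monom_mult_sum_monom:
  "(\<Sum>t\<in>T. monom (1::'a::comm_ring_1) (e t)) * (\<Sum>c\<in>C. monom 1 c) = (\<Sum>x\<in>T \<times> C. monom 1 (e (fst x) + snd x))"
  unfolding sum_distrib_right by (simp add: sum_distrib_left mult_monom sum.cartesian_product case_prod_beta)

lemma cyclic_coeff_sum_monom_mult_sum_monom:
  assumes "finite T" "finite C"
  shows "cyclic_coeff n ((\<Sum>t\<in>T. monom 1 (e t)) * (\<Sum>c\<in>C. monom 1 c)) g
    = of_nat (card {(t, c). t \<in> T \<and> c \<in> C \<and> (e t + c) mod n = g})"
proof -
  have "{x \<in> T \<times> C. (e (fst x) + snd x) mod n = g} = {(t, c). t \<in> T \<and> c \<in> C \<and> (e t + c) mod n = g}"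
    by auto
  then show ?thesis
    unfolding sum_monom_mult_sum_monom using assms by (simp add: cyclic_coeff_sum_monom_one)
qed

section \<open>Circulant graphs\<close>

lemma circ_adj_iff:
  assumes "u < n"
  shows "circ_adj n S u v \<longleftrightarrow> (v + n - u) mod n \<in> S"
proof -
  have "int ((v + n - u) mod n) = (int v - int u + int n) mod int n"
    using assms by (simp add: zmod_int of_nat_diff algebra_simps)
  then show ?thesis
    unfolding circ_adj_def by (metis mod_add_self2 nat_int)
qed

lemma circ_adj_sym:
  assumes "inverse_closed n S" "u < n" "v < n" "circ_adj n S u v"
  shows "circ_adj n S v u"
  using assms mod_neg_diff_eq[of u n v]
  unfolding inverse_closed_def circ_adj_iff[OF assms(2)] circ_adj_iff[OF assms(3)] by metis

lemma circ_adj_irrefl: "0 \<notin> S \<Longrightarrow> \<not> circ_adj n S g g"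
  by (simp add: circ_adj_def)

lemma closed_nbhd_iff:
  assumes "inverse_closed n S" "c < n" "g < n"
  shows "(g + n - c) mod n \<in> insert 0 S \<longleftrightarrow> c = g \<or> circ_adj n S g c"
proof -
  have "circ_adj n S c g \<longleftrightarrow> circ_adj n S g c"
    using circ_adj_sym[OF assms(1)] assms(2,3) by blast
  then show ?thesis
    using mod_add_sub_eq_0_iff[OF assms(2,3)] circ_adj_iff[OF assms(2), of S g] by auto
qed

lemma circ_connected_induct [consumes 2, case_names zero step mod_cong]:
  assumes "circ_connected n S" "0 < n"
    and "P 0"
    and "\<And>x s. P x \<Longrightarrow> s \<in> S \<Longrightarrow> P (x + s)"
    and "\<And>x y. P x \<Longrightarrow> x mod n = y mod n \<Longrightarrow> P y"
  shows "P x"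
proof -
  have "P v" if "(0, v) \<in> (circ_edges n S)\<^sup>*" for v
    using that
  proof (induction rule: rtrancl_induct)
    case (step u v)
    then have "u < n" "v < n" "(v + n - u) mod n \<in> S"
      unfolding circ_edges_def by (auto simp: circ_adj_iff)
    moreover have "(u + (v + n - u) mod n) mod n = v"
      using mod_add_eq_iff[of u n "(v + n - u) mod n" v] \<open>u < n\<close> \<open>v < n\<close> by simp
    ultimately show ?case
      using step.IH assms(4,5) by (metis mod_mod_trivial)
  qed (rule assms(3))
  then have "P (x mod n)"
    using assms(1,2) unfolding circ_connected_def by simp
  then show ?thesis
    using assms(5) by (metis mod_mod_trivial)
qed

section \<open>Tilings of Z_n\<close>

definition tiles :: "nat \<Rightarrow> nat set \<Rightarrow> nat set \<Rightarrow> bool" where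
  "tiles n T C \<longleftrightarrow> bij_betw (\<lambda>(t, c). (t + c) mod n) (T \<times> C) {..<n}"

lemma tiles_imp_unique:
  assumes tiles: "tiles n T C" and T: "T \<subseteq> {..<n}" and C: "C \<subseteq> {..<n}" and g: "g < n"
  shows "\<exists>!c\<in>C. (g + n - c) mod n \<in> T"
proof -
  have "g \<in> (\<lambda>(t, c). (t + c) mod n) ` (T \<times> C)"
    using tiles g unfolding tiles_def bij_betw_def by simp
  then obtain t c where tc: "t \<in> T" "c \<in> C" "(t + c) mod n = g"
    by auto
  have "t < n" "c < n"
    using tc(1,2) T C by auto
  then have "(g + n - c) mod n \<in> T"
    using mod_add_eq_iff[of c n t g] tc g by (simp add: add.commute)
  moreover have inj: "inj_on (\<lambda>(t, c). (t + c) mod n) (T \<times> C)"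
    using tiles unfolding tiles_def bij_betw_def by blast
  have "c' = c" if c': "c' \<in> C" "(g + n - c') mod n \<in> T" for c'
  proof -
    have "((g + n - c') mod n, c') = (t, c)"
      by (rule inj_onD[OF inj]) (use c' tc C g in \<open>auto simp: mod_sub_add_cancel\<close>)
    then show ?thesis by simp
  qed
  ultimately show ?thesis
    using tc(2) by blast
qed

lemma unique_imp_tiles:
  assumes T: "T \<subseteq> {..<n}" and C: "C \<subseteq> {..<n}"
    and uniq: "\<And>g. g < n \<Longrightarrow> \<exists>!c\<in>C. (g + n - c) mod n \<in> T"
  shows "tiles n T C"
proof -
  have "inj_on (\<lambda>(t, c). (t + c) mod n) (T \<times> C)"
  proof (rule inj_onI, clarsimp)
    fix t c t' c' assume tc: "t \<in> T" "c \<in> C" "t' \<in> T" "c' \<in> C"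
      and eq: "(t + c) mod n = (t' + c') mod n"
    define g where "g = (t + c) mod n"
    have g: "g < n"
      using tc(2) C g_def by auto
    have "t = (g + n - c) mod n" "t' = (g + n - c') mod n"
      using mod_add_eq_iff[of c n t g] mod_add_eq_iff[of c' n t' g] tc T C eq g_def
      by (auto simp: add.commute)
    moreover from this have "c = c'"
      using uniq[OF g] tc by blast
    ultimately show "t = t' \<and> c = c'"
      by simp
  qed
  moreover have "(\<lambda>(t, c). (t + c) mod n) ` (T \<times> C) = {..<n}"
  proof (intro equalityI subsetI)
    fix g assume "g \<in> {..<n}"
    then have g: "g < n"
      by simp
    then obtain c where "c \<in> C" "(g + n - c) mod n \<in> T"
      using uniq by blast
    moreover have "((g + n - c) mod n + c) mod n = g"
      using \<open>c \<in> C\<close> C g by (simp add: subset_iff mod_sub_add_cancel)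
    ultimately show "g \<in> (\<lambda>(t, c). (t + c) mod n) ` (T \<times> C)"
      by force
  qed (use C in auto)
  ultimately show ?thesis
    unfolding tiles_def bij_betw_def by blast
qed

lemma tiles_iff_unique:
  assumes "T \<subseteq> {..<n}" "C \<subseteq> {..<n}"
  shows "tiles n T C \<longleftrightarrow> (\<forall>g<n. \<exists>!c\<in>C. (g + n - c) mod n \<in> T)"
  using tiles_imp_unique[OF _ assms] unique_imp_tiles[OF assms] by blast

lemma perfect_code_iff_unique_closed_nbhd:
  assumes "0 \<notin> S"
  shows "is_perfect_code n S C \<longleftrightarrow> C \<subseteq> {..<n} \<and> (\<forall>g<n. \<exists>!c\<in>C. c = g \<or> circ_adj n S g c)"
proof
  assume code: "is_perfect_code n S C"
  then have C: "C \<subseteq> {..<n}" and ind: "\<And>c c'. c \<in> C \<Longrightarrow> c' \<in> C \<Longrightarrow> \<not> circ_adj n S c c'"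
    and out: "\<And>g. g < n \<Longrightarrow> g \<notin> C \<Longrightarrow> \<exists>!c\<in>C. circ_adj n S g c"
    unfolding is_perfect_code_def card_filter_eq_1_iff by auto
  have "\<exists>!c\<in>C. c = g \<or> circ_adj n S g c" if "g < n" for g
  proof (cases "g \<in> C")
    case True
    then show ?thesis using ind by blast
  next
    case False
    then show ?thesis using out[OF that] by blast
  qed
  with C show "C \<subseteq> {..<n} \<and> (\<forall>g<n. \<exists>!c\<in>C. c = g \<or> circ_adj n S g c)"
    by blast
next
  assume "C \<subseteq> {..<n} \<and> (\<forall>g<n. \<exists>!c\<in>C. c = g \<or> circ_adj n S g c)"
  then have C: "C \<subseteq> {..<n}" and uniq: "\<And>g. g < n \<Longrightarrow> \<exists>!c\<in>C. c = g \<or> circ_adj n S g c"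
    by auto
  have ind: "\<not> circ_adj n S c c'" if "c \<in> C" "c' \<in> C" for c c'
    using uniq[of c] that C circ_adj_irrefl[OF assms] by blast
  have "card {c\<in>C. circ_adj n S g c} = 1" if "g < n" "g \<notin> C" for g
    unfolding card_filter_eq_1_iff using uniq[OF that(1)] that(2) by metis
  with C ind show "is_perfect_code n S C"
    unfolding is_perfect_code_def by auto
qed

lemma perfect_code_iff_tiles:
  assumes "0 < n" "S \<subseteq> {..<n}" "0 \<notin> S" "inverse_closed n S"
  shows "is_perfect_code n S C \<longleftrightarrow> C \<subseteq> {..<n} \<and> tiles n (insert 0 S) C"
proof (cases "C \<subseteq> {..<n}")
  case C: True
  have nbhd: "(\<exists>!c\<in>C. c = g \<or> circ_adj n S g c) \<longleftrightarrow> (\<exists>!c\<in>C. (g + n - c) mod n \<in> insert 0 S)"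
    if "g < n" for g
  proof -
    have "c \<in> C \<and> (c = g \<or> circ_adj n S g c) \<longleftrightarrow> c \<in> C \<and> (g + n - c) mod n \<in> insert 0 S" for c
    proof (cases "c \<in> C")
      case True
      then have "c < n"
        using C by auto
      then show ?thesis
        using True closed_nbhd_iff[OF assms(4) _ that] by (simp only: simp_thms)
    qed simp
    then show ?thesis
      by (simp only:)
  qed
  have T: "insert 0 S \<subseteq> {..<n}"
    using assms(1,2) by auto
  show ?thesis
    unfolding perfect_code_iff_unique_closed_nbhd[OF assms(3)] tiles_iff_unique[OF T C]
    using C nbhd by simp
next
  case False
  then show ?thesis
    unfolding perfect_code_iff_unique_closed_nbhd[OF assms(3)] by simp
qed

lemma tiles_card:
  assumes "tiles n T C"
  shows "card T * card C = n"
  using bij_betw_same_card[OF assms[unfolded tiles_def]] by (simp add: card_cartesian_product)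

lemma tiles_multiples:
  assumes p: "0 < p" "p dvd n" and T: "card T = p" "inj_on (\<lambda>t. t mod p) T"
  shows "tiles n T {c. c < n \<and> p dvd c}"
proof -
  let ?M = "{c. c < n \<and> p dvd c}" and ?f = "\<lambda>(t, c). (t + c) mod n"
  have "inj_on ?f (T \<times> ?M)"
  proof (rule inj_onI, clarsimp)
    fix t c t' c' assume "t \<in> T" "t' \<in> T" "c < n" "p dvd c" "c' < n" "p dvd c'"
      and eq: "(t + c) mod n = (t' + c') mod n"
    then have "(t + c) mod p = (t' + c') mod p"
      using p(2) by (metis mod_mod_cancel)
    then have "t mod p = t' mod p"
      using \<open>p dvd c\<close> \<open>p dvd c'\<close> by (simp add: mod_add_right_eq[symmetric])
    then have "t = t'"
      using inj_onD[OF T(2)] \<open>t \<in> T\<close> \<open>t' \<in> T\<close> by blast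
    with eq \<open>c < n\<close> \<open>c' < n\<close> show "t = t' \<and> c = c'"
      by (simp add: mod_add_left_cancel_nat)
  qed
  moreover have "?f ` (T \<times> ?M) \<subseteq> {..<n}"
    using p by (auto elim: dvdE)
  moreover have "card (T \<times> ?M) = card {..<n}"
    using p T(1) by (simp add: card_cartesian_product card_multiples_below)
  ultimately have "?f ` (T \<times> ?M) = {..<n}"
    using card_subset_eq[of "{..<n}" "?f ` (T \<times> ?M)"] by (simp add: card_image)
  with \<open>inj_on ?f (T \<times> ?M)\<close> show ?thesis
    unfolding tiles_def bij_betw_def by blast
qed

lemma tiles_fibre_card:
  assumes "tiles n T C" "g < n"
  shows "card {(t, c). t \<in> T \<and> c \<in> C \<and> (t + c) mod n = g} = 1"
proof -
  let ?f = "\<lambda>(t, c). (t + c) mod n"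
  have "g \<in> ?f ` (T \<times> C)"
    using assms unfolding tiles_def bij_betw_def by simp
  then obtain x where x: "x \<in> T \<times> C" "?f x = g"
    by blast
  have "{(t, c). t \<in> T \<and> c \<in> C \<and> (t + c) mod n = g} = {x}"
    using x bij_betw_imp_inj_on[OF assms(1)[unfolded tiles_def]] by (auto simp: inj_on_def)
  then show ?thesis
    by simp
qed

text \<open>With \<open>A = \<Sum>\<^sub>t X\<^sup>t\<close> and \<open>D = \<Sum>\<^sub>c X\<^sup>c\<close>, the tiling says \<open>A D\<close> is the all-ones element
  of the group ring, so \<open>A\<^sup>p D\<close> has all coefficients \<open>p\<^sup>p\<^sup>-\<^sup>1\<close>; since
  \<open>A\<^sup>p \<equiv> \<Sum>\<^sub>t X\<^sup>t\<^sup>p\<close> modulo \<open>p\<close>, every coefficient of \<open>(\<Sum>\<^sub>t X\<^sup>t\<^sup>p) D\<close> is divisible by \<open>p\<close>.\<close>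

lemma tiles_fibre_dvd_prime:
  assumes tiles: "tiles n T C" and p: "prime p" "card T = p" and C: "C \<subseteq> {..<n}" and g: "g < n"
  shows "p dvd card {(t, c). t \<in> T \<and> c \<in> C \<and> (t * p + c) mod n = g}"
proof -
  have fin: "finite T" "finite C"
    using p prime_gt_0_nat card_gt_0_iff finite_subset[OF C] by auto
  define D :: "int poly" where "D = (\<Sum>c\<in>C. monom 1 c)"
  define A :: "int poly" where "A = (\<Sum>t\<in>T. monom 1 t)"
  define B :: "int poly" where "B = (\<Sum>t\<in>T. monom 1 (t * p))"
  have count: "cyclic_coeff n ((\<Sum>t\<in>T. monom 1 (e t)) * D) h
      = int (card {(t, c). t \<in> T \<and> c \<in> C \<and> (e t + c) mod n = h})" for e h
    unfolding D_def using fin by (rule cyclic_coeff_sum_monom_mult_sum_monom)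
  have AD: "cyclic_coeff n (A * D) h = 1" if "h < n" for h
    using count[of "\<lambda>t. t" h] tiles_fibre_card[OF tiles that] unfolding A_def by simp
  have split: "A ^ p * D = A ^ (p - 1) * (A * D)"
    using prime_gt_0_nat[OF p(1)] by (simp add: power_eq_if mult.assoc)
  have ApD: "cyclic_coeff n (A ^ p * D) g = int p ^ (p - 1)"
    unfolding split using cyclic_coeff_mult_const[OF AD g, of "A ^ (p - 1)"] p(2)
    by (simp add: A_def poly_power poly_sum poly_monom)
  have "of_nat p dvd A ^ p - B"
    using prime_dvd_power_sum_minus[OF p(1), of "\<lambda>t. monom 1 t" T]
    unfolding A_def B_def by (simp add: monom_power)
  then obtain r where r: "A ^ p - B = of_nat p * r"
    by (rule dvdE)
  have "cyclic_coeff n (A ^ p * D) g - cyclic_coeff n (B * D) g = cyclic_coeff n ((A ^ p - B) * D) g"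
    by (simp add: cyclic_coeff_diff left_diff_distrib)
  also have "\<dots> = int p * cyclic_coeff n (r * D) g"
    by (simp add: r mult.assoc of_nat_mult_conv_smult cyclic_coeff_smult)
  finally have K: "int (card {(t, c). t \<in> T \<and> c \<in> C \<and> (t * p + c) mod n = g})
      = int p ^ (p - 1) - int p * cyclic_coeff n (r * D) g"
    using ApD count[of "\<lambda>t. t * p" g] unfolding B_def by simp
  have "int p dvd int p ^ (p - 1) - int p * cyclic_coeff n (r * D) g"
    using prime_ge_2_nat[OF p(1)] by (intro dvd_diff) simp_all
  then have "int p dvd int (card {(t, c). t \<in> T \<and> c \<in> C \<and> (t * p + c) mod n = g})"
    by (simp only: K)
  then show ?thesis
    by (simp only: of_nat_dvd_iff)
qed

lemma tiles_fibre_inj_fst: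
  assumes "tiles n T C"
  shows "inj_on fst {(t, c). t \<in> T \<and> c \<in> C \<and> (t * p + c) mod n = g}"
proof (rule inj_onI)
  have inj: "inj_on (\<lambda>(t, c). (t + c) mod n) (T \<times> C)"
    using assms unfolding tiles_def bij_betw_def by blast
  fix x y assume "x \<in> {(t, c). t \<in> T \<and> c \<in> C \<and> (t * p + c) mod n = g}"
    "y \<in> {(t, c). t \<in> T \<and> c \<in> C \<and> (t * p + c) mod n = g}" "fst x = fst y"
  then obtain t c1 c2 where xy: "x = (t, c1)" "y = (t, c2)" "t \<in> T" "c1 \<in> C" "c2 \<in> C"
    "(t * p + c1) mod n = (t * p + c2) mod n"
    by (cases x, cases y) auto
  then have "(t + c1) mod n = (t + c2) mod n"
    using mod_add_left_cancel_nat[of "t * p" c1 n c2] mod_add_left_cancel_nat[of t c1 n c2] by simp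
  then have "(t, c1) = (t, c2)"
    using inj_onD[OF inj, of "(t, c1)" "(t, c2)"] xy by simp
  then show "x = y"
    using xy by simp
qed

text \<open>A nonempty fibre of \<open>(t, c) \<mapsto> t p + c\<close> has at most one point over each \<open>t\<close>,
  hence exactly \<open>p\<close> points, and its point over \<open>t = 0\<close> lies in \<open>C\<close>.\<close>

lemma tiles_prime_multiplier:
  assumes tiles: "tiles n T C" and p: "prime p" "card T = p" and "0 \<in> T" and C: "C \<subseteq> {..<n}"
    and "t \<in> T" "c \<in> C"
  shows "(c + t * p) mod n \<in> C"
proof -
  define g where "g = (t * p + c) mod n"
  have "g < n"
    using \<open>c \<in> C\<close> C g_def by auto
  define K where "K = {(t', c'). t' \<in> T \<and> c' \<in> C \<and> (t' * p + c') mod n = g}"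
  have fin: "finite T"
    using p prime_gt_0_nat card_gt_0_iff by blast
  have inj: "inj_on fst K"
    unfolding K_def by (rule tiles_fibre_inj_fst[OF tiles])
  have sub: "fst ` K \<subseteq> T"
    unfolding K_def by auto
  have "card K \<le> p"
    using card_mono[OF fin sub] p(2) inj by (simp add: card_image)
  moreover have "card K \<noteq> 0"
  proof -
    have "K \<subseteq> T \<times> C"
      unfolding K_def by auto
    then have "finite K"
      using fin finite_subset[OF C] by (meson finite_SigmaI finite_lessThan finite_subset)
    moreover have "(t, c) \<in> K"
      unfolding K_def g_def using \<open>t \<in> T\<close> \<open>c \<in> C\<close> by simp
    ultimately show ?thesis
      by auto
  qed
  moreover have "p dvd card K"
    unfolding K_def using tiles_fibre_dvd_prime[OF tiles p C \<open>g < n\<close>] .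
  ultimately have "card K = p"
    using dvd_imp_le by (meson le_antisym not_gr_zero)
  then have "card (fst ` K) = card T"
    using inj p(2) by (simp add: card_image)
  then have "fst ` K = T"
    using card_subset_eq[OF fin sub] by simp
  then obtain c' where "(0, c') \<in> K"
    using \<open>0 \<in> T\<close> by force
  then have "c' = g"
    using C unfolding K_def by auto
  with \<open>(0, c') \<in> K\<close> show ?thesis
    unfolding K_def g_def by (simp add: add.commute)
qed

lemma tiles_shift_invariant:
  assumes conn: "circ_connected n S" and "0 < n"
    and tiles: "tiles n (insert 0 S) C" and p: "prime p" "card (insert 0 S) = p" and C: "C \<subseteq> {..<n}"
  shows "\<forall>c\<in>C. (c + x * p) mod n \<in> C"
  using conn \<open>0 < n\<close>
proof (induction x rule: circ_connected_induct)
  case zero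
  then show ?case
    using C by auto
next
  case (step x s)
  show ?case
  proof
    fix c assume "c \<in> C"
    then have "(c + x * p) mod n \<in> C"
      using step.IH by blast
    then have "((c + x * p) mod n + s * p) mod n \<in> C"
      using tiles_prime_multiplier[OF tiles p _ C] step.hyps by blast
    moreover have "((c + x * p) mod n + s * p) mod n = (c + (x + s) * p) mod n"
      unfolding mod_add_left_eq by (simp add: algebra_simps)
    ultimately show "(c + (x + s) * p) mod n \<in> C"
      by simp
  qed
next
  case (mod_cong x y)
  then show ?case
    by (metis mod_add_right_eq mod_mult_left_eq)
qed

lemma tiles_residues_inj:
  assumes tiles: "tiles n T C" and "c0 \<in> C" and shift: "\<And>x c. c \<in> C \<Longrightarrow> (c + x * p) mod n \<in> C"
  shows "inj_on (\<lambda>t. t mod p) T"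
proof -
  have inj: "inj_on (\<lambda>(t, c). (t + c) mod n) (T \<times> C)"
    using tiles unfolding tiles_def bij_betw_def by blast
  have "s = s'" if st: "s \<in> T" "s' \<in> T" "s' mod p = s mod p" "s \<le> s'" for s s'
  proof -
    obtain k where k: "s' = s + p * k"
      using mod_eq_nat1E[OF st(3,4)] by metis
    let ?c = "(c0 + k * p) mod n"
    have "(s + ?c) mod n = (s' + c0) mod n"
      unfolding k mod_add_right_eq by (simp add: algebra_simps)
    then have "(s, ?c) = (s', c0)"
      using inj_onD[OF inj, of "(s, ?c)" "(s', c0)"] st(1,2) shift[OF \<open>c0 \<in> C\<close>] \<open>c0 \<in> C\<close> by simp
    then show ?thesis
      by simp
  qed
  then show ?thesis
    by (metis inj_onI nat_le_linear)
qed

lemma tiles_imp_dvd_residues_inj: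
  assumes conn: "circ_connected n S" "0 < n" and tiles: "tiles n (insert 0 S) C" and C: "C \<subseteq> {..<n}"
    and p: "prime p" "card (insert 0 S) = p"
  shows "p dvd n \<and> inj_on (\<lambda>t. t mod p) (insert 0 S)"
proof
  have "p * card C = n"
    using tiles_card[OF tiles] p(2) by simp
  then show "p dvd n"
    by (metis dvd_triv_left)
  from \<open>p * card C = n\<close> obtain c0 where "c0 \<in> C"
    using conn(2) by fastforce
  moreover have "\<forall>c\<in>C. (c + x * p) mod n \<in> C" for x
    by (rule tiles_shift_invariant[OF conn tiles p C])
  ultimately show "inj_on (\<lambda>t. t mod p) (insert 0 S)"
    using tiles_residues_inj[OF tiles] by blast
qed

theorem theorem1p1:
  fixes n p :: nat and S :: "nat set"
  assumes "n > 0" and "prime p" and "odd p"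
    and "S \<subseteq> {0..<n}" and "0 \<notin> S" and "inverse_closed n S"
    and "card S = p - 1"
    and "circ_connected n S"
  shows "has_perfect_code n S \<longleftrightarrow>
           (p dvd n \<and> (\<forall>s\<in>S \<union> {0}. \<forall>s'\<in>S \<union> {0}. s \<noteq> s' \<longrightarrow> s mod p \<noteq> s' mod p))"
proof -
  define T where "T = insert 0 S"
  have S: "S \<subseteq> {..<n}"
    using assms(4) by auto
  have card_T: "card T = p"
    using assms(2,5,7) finite_subset[OF S] prime_gt_0_nat unfolding T_def by simp
  have code: "has_perfect_code n S \<longleftrightarrow> (\<exists>C. C \<subseteq> {..<n} \<and> tiles n T C)"
    unfolding has_perfect_code_def T_def perfect_code_iff_tiles[OF assms(1) S assms(5,6)] ..
  have residues: "(\<forall>s\<in>S \<union> {0}. \<forall>s'\<in>S \<union> {0}. s \<noteq> s' \<longrightarrow> s mod p \<noteq> s' mod p)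
      \<longleftrightarrow> inj_on (\<lambda>t. t mod p) T"
    unfolding T_def inj_on_def by auto
  have multiples: "{c. c < n \<and> p dvd c} \<subseteq> {..<n}"
    by auto
  show ?thesis
    unfolding code residues
    using tiles_imp_dvd_residues_inj[OF assms(8,1) _ _ assms(2) card_T[unfolded T_def]]
      tiles_multiples[OF prime_gt_0_nat[OF assms(2)] _ card_T] multiples
    unfolding T_def by blast
qed

end
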